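(* Let $J$ be an instance of $1\,||\,\sum w_jU_j$ with $d_{\#}$ distinct due dates, maximum due date $d_{\max}$ and maximum weight $w_{\max}$. Let $A$ be its solution vector and $A'$ its fractional solution vector. Then $0\le A'[k]-A[k]\le d_{\#}w_{\max}$ for every $k\in\{0,\ldots,d_{\max}\}$.
   Context: Jobs $j\in J=\{1,\ldots,n\}$ have processing times $p_j\in\mathbb{N}$, weights $w_j\in\mathbb{N}$ and due dates $d_j\in\mathbb{N}$; $d_{\max}=\max_jd_j$, $w_{\max}=\max_jw_j$. A set $S\subseteq J$ is a set of early jobs if for every $j\in J$, $\sum_{\ell\in S: d_\ell\le d_j}p_\ell\le d_j$ (equivalently, some single-machine non-preemptive schedule completes every job of $S$ by its due date). The solution vector is $(A[k])_{k=0}^{d_{\max}}$, $A[k]$ = maximum total weight of a set of early jobs with total processing time at most $k$. A feasible fractional solution is a real vector $0\le x_1,\ldots,x_n\le1$ with $\sum_{\ell:d_\ell\le d_j}p_\ell x_\ell\le d_j$ for all $j$; the fractional solution vector is $(A'[k])_{k=0}^{d_{\max}}$ with $A'[k]$ = maximum of $\sum_jw_jx_j$ over feasible fractional solutions with $\sum_jp_jx_j\le k$. *)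

theory Defs
  imports "HOL-Analysis.Analysis"
begin

definition early_set :: "nat set \<Rightarrow> (nat \<Rightarrow> nat) \<Rightarrow> (nat \<Rightarrow> nat) \<Rightarrow> nat set \<Rightarrow> bool" where
  "early_set J p d S \<longleftrightarrow> S \<subseteq> J \<and>
     (\<forall>j\<in>J. (\<Sum>l\<in>{l\<in>S. d l \<le> d j}. p l) \<le> d j)"

definition sol_vec :: "nat set \<Rightarrow> (nat \<Rightarrow> nat) \<Rightarrow> (nat \<Rightarrow> nat) \<Rightarrow> (nat \<Rightarrow> nat) \<Rightarrow> nat \<Rightarrow> nat" where
  "sol_vec J p w d k =
     Max {(\<Sum>j\<in>S. w j) | S. early_set J p d S \<and> (\<Sum>j\<in>S. p j) \<le> k}"

definition frac_feasible :: "nat set \<Rightarrow> (nat \<Rightarrow> nat) \<Rightarrow> (nat \<Rightarrow> nat) \<Rightarrow> (nat \<Rightarrow> real) \<Rightarrow> bool" where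
  "frac_feasible J p d x \<longleftrightarrow> (\<forall>j\<in>J. 0 \<le> x j \<and> x j \<le> 1) \<and>
     (\<forall>j\<in>J. (\<Sum>l\<in>{l\<in>J. d l \<le> d j}. real (p l) * x l) \<le> real (d j))"

definition frac_sol_vec :: "nat set \<Rightarrow> (nat \<Rightarrow> nat) \<Rightarrow> (nat \<Rightarrow> nat) \<Rightarrow> (nat \<Rightarrow> nat) \<Rightarrow> nat \<Rightarrow> real" where
  "frac_sol_vec J p w d k =
     Sup {(\<Sum>j\<in>J. real (w j) * x j) | x. frac_feasible J p d x \<and>
            (\<Sum>j\<in>J. real (p j) * x j) \<le> real k}"

end

theory Submission
  imports Defs
begin

(* While two jobs with the same due date are both fractional, shift
   processing time from the one with the smaller weight per unit of processing time to the other
   until one of them becomes 0 or 1: the loads of all due-date prefixes and the total load stay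
   the same and the weight does not decrease.  Afterwards at most one job per due date is
   fractional, and rounding those down leaves an early set while losing at most d# * w_max.
   Conversely, the indicator vector of an early set is a feasible fractional solution. *)

lemma shift_mass_to_better_ratio:
  fixes pa pb wa wb xa xb :: real
  assumes "0 \<le> pa" "0 \<le> pb" "0 \<le> wa" "wb * pa \<le> wa * pb"
    and "xa \<in> {0..1}" "xb \<in> {0..1}"
  shows "\<exists>u v. u \<in> {0..1} \<and> v \<in> {0..1} \<and> (u = 1 \<or> v = 0)
    \<and> pa * u + pb * v = pa * xa + pb * xb \<and> wa * xa + wb * xb \<le> wa * u + wb * v"
proof (cases "(1 - xa) * pa \<le> xb * pb")
  case True
  define v where "v = xb - (1 - xa) * pa / pb"
  \<comment> \<open>If \<open>pb = 0\<close>, the division in \<open>v\<close> yields 0 and \<open>v = xb\<close>.\<close>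
  have pb0: "(1 - xa) * pa = 0" if "pb = 0"
  proof (rule antisym)
    show "(1 - xa) * pa \<le> 0" using True that by simp
    show "0 \<le> (1 - xa) * pa" using assms by simp
  qed
  have "(1 - xa) * pa / pb \<le> xb"
    using True assms by (cases "pb = 0") (auto simp: field_simps)
  moreover have "0 \<le> (1 - xa) * pa / pb"
    using assms by simp
  ultimately have "v \<in> {0..1}"
    using assms unfolding v_def atLeastAtMost_iff by linarith
  moreover have "pa * 1 + pb * v = pa * xa + pb * xb"
    using pb0 by (cases "pb = 0") (auto simp: v_def field_simps)
  moreover have "wb * ((1 - xa) * pa / pb) \<le> wa * (1 - xa)"
  proof (cases "pb = 0")
    case False
    have "wb * ((1 - xa) * pa / pb) = (1 - xa) * (wb * pa) / pb" by simp
    also have "\<dots> \<le> (1 - xa) * (wa * pb) / pb"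
      using assms by (intro divide_right_mono mult_left_mono) auto
    finally show ?thesis using False by (simp add: mult.commute)
  qed (use assms in simp)
  then have "wa * xa + wb * xb \<le> wa * 1 + wb * v"
    by (simp add: v_def algebra_simps)
  ultimately show ?thesis by (metis atLeastAtMost_iff order_refl zero_le_one)
next
  case False
  then have "pa > 0"
    using assms mult_nonneg_nonneg[of xb pb] by (cases "pa = 0") auto
  define u where "u = xa + xb * pb / pa"
  have "u \<in> {0..1}"
    using False assms \<open>pa > 0\<close> by (auto simp: u_def field_simps)
  moreover have "pa * u + pb * 0 = pa * xa + pb * xb"
    using \<open>pa > 0\<close> by (simp add: u_def algebra_simps)
  moreover have "wb * xb \<le> wa * (xb * pb / pa)"
  proof -
    have "wb * xb = xb * (wb * pa) / pa" using \<open>pa > 0\<close> by simp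
    also have "\<dots> \<le> xb * (wa * pb) / pa"
      using assms by (intro divide_right_mono mult_left_mono) auto
    finally show ?thesis by (simp add: ac_simps)
  qed
  then have "wa * xa + wb * xb \<le> wa * u + wb * 0"
    by (simp add: u_def algebra_simps)
  ultimately show ?thesis by (metis atLeastAtMost_iff order_refl zero_le_one)
qed

lemma exchange_pair_rounds_one:
  fixes pa pb wa wb xa xb :: real
  assumes "0 \<le> pa" "0 \<le> pb" "0 \<le> wa" "0 \<le> wb" "xa \<in> {0..1}" "xb \<in> {0..1}"
  shows "\<exists>u v. u \<in> {0..1} \<and> v \<in> {0..1} \<and> (u \<in> {0, 1} \<or> v \<in> {0, 1})
    \<and> pa * u + pb * v = pa * xa + pb * xb \<and> wa * xa + wb * xb \<le> wa * u + wb * v"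
proof (cases "wb * pa \<le> wa * pb")
  case True
  then show ?thesis
    using shift_mass_to_better_ratio[of pa pb wa wb xa xb] assms by blast
next
  case False
  then obtain v u where "v \<in> {0..1}" "u \<in> {0..1}" "v = 1 \<or> u = 0"
    "pb * v + pa * u = pb * xb + pa * xa" "wb * xb + wa * xa \<le> wb * v + wa * u"
    using shift_mass_to_better_ratio[of pb pa wb wa xb xa] assms by auto
  then show ?thesis by (metis add.commute insert_iff)
qed

lemma sum_mult_fun_upd2:
  fixes c x :: "'a \<Rightarrow> 'b::comm_ring"
  assumes "finite T" "a \<in> T" "b \<in> T" "a \<noteq> b"
  shows "(\<Sum>l\<in>T. c l * (x(a := u, b := v)) l)
    = (\<Sum>l\<in>T. c l * x l) - (c a * x a + c b * x b) + (c a * u + c b * v)"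
proof -
  have T: "T = insert a (insert b (T - {a, b}))"
    using assms by auto
  have "(\<Sum>l\<in>T - {a, b}. c l * (x(a := u, b := v)) l) = (\<Sum>l\<in>T - {a, b}. c l * x l)"
    by (intro sum.cong) auto
  then show ?thesis
    using assms by (subst (1 2) T) (simp add: algebra_simps)
qed

definition frac_jobs :: "nat set \<Rightarrow> (nat \<Rightarrow> real) \<Rightarrow> nat set" where
  "frac_jobs J x = {j \<in> J. 0 < x j \<and> x j < 1}"

definition full_jobs :: "nat set \<Rightarrow> (nat \<Rightarrow> real) \<Rightarrow> nat set" where
  "full_jobs J x = {j \<in> J. x j = 1}"

lemma exchange_same_due_date:
  assumes fin: "finite J" and feas: "frac_feasible J p d x"
    and budget: "(\<Sum>j\<in>J. real (p j) * x j) \<le> real k"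
    and a: "a \<in> frac_jobs J x" and b: "b \<in> frac_jobs J x" and "a \<noteq> b" and "d a = d b"
  shows "\<exists>y. frac_feasible J p d y \<and> (\<Sum>j\<in>J. real (p j) * y j) \<le> real k
    \<and> (\<Sum>j\<in>J. real (w j) * x j) \<le> (\<Sum>j\<in>J. real (w j) * y j)
    \<and> frac_jobs J y \<subset> frac_jobs J x"
proof -
  have "x a \<in> {0..1}" "x b \<in> {0..1}"
    using a b by (auto simp: frac_jobs_def)
  then obtain u v where uv: "u \<in> {0..1}" "v \<in> {0..1}" "u \<in> {0, 1} \<or> v \<in> {0, 1}"
    and mass: "real (p a) * u + real (p b) * v = real (p a) * x a + real (p b) * x b"
    and weight: "real (w a) * x a + real (w b) * x b \<le> real (w a) * u + real (w b) * v"
    using exchange_pair_rounds_one[of "real (p a)" "real (p b)" "real (w a)" "real (w b)" "x a" "x b"]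
    by auto
  define y where "y = x(a := u, b := v)"
  have aJ: "a \<in> J" and bJ: "b \<in> J"
    using a b by (auto simp: frac_jobs_def)
  have load_eq: "(\<Sum>l\<in>T. real (p l) * y l) = (\<Sum>l\<in>T. real (p l) * x l)"
    if "T \<subseteq> J" "a \<in> T \<longleftrightarrow> b \<in> T" for T
  proof (cases "a \<in> T")
    case True
    then show ?thesis
      using that fin mass \<open>a \<noteq> b\<close> sum_mult_fun_upd2[of T a b "\<lambda>l. real (p l)" x u v]
      by (auto simp: y_def finite_subset)
  qed (use that in \<open>auto simp: y_def intro!: sum.cong\<close>)
  have "frac_feasible J p d y"
    unfolding frac_feasible_def
  proof (intro conjI ballI)
    fix j assume "j \<in> J"
    then show "0 \<le> y j" "y j \<le> 1"
      using feas uv unfolding frac_feasible_def y_def by auto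
    have "(\<Sum>l\<in>{l\<in>J. d l \<le> d j}. real (p l) * y l)
        = (\<Sum>l\<in>{l\<in>J. d l \<le> d j}. real (p l) * x l)"
      using \<open>d a = d b\<close> aJ bJ by (intro load_eq) auto
    then show "(\<Sum>l\<in>{l\<in>J. d l \<le> d j}. real (p l) * y l) \<le> real (d j)"
      using feas \<open>j \<in> J\<close> unfolding frac_feasible_def by auto
  qed
  moreover have "(\<Sum>j\<in>J. real (p j) * y j) \<le> real k"
    using load_eq[of J] budget aJ bJ by auto
  moreover have "(\<Sum>j\<in>J. real (w j) * x j) \<le> (\<Sum>j\<in>J. real (w j) * y j)"
    using fin aJ bJ \<open>a \<noteq> b\<close> weight sum_mult_fun_upd2[of J a b "\<lambda>l. real (w l)" x u v]
    by (simp add: y_def)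
  moreover have "frac_jobs J y \<subset> frac_jobs J x"
  proof
    show "frac_jobs J y \<subseteq> frac_jobs J x"
      using a b by (auto simp: frac_jobs_def y_def)
    have "a \<notin> frac_jobs J y \<or> b \<notin> frac_jobs J y"
      using uv(3) \<open>a \<noteq> b\<close> by (auto simp: frac_jobs_def y_def)
    then show "frac_jobs J y \<noteq> frac_jobs J x"
      using a b by blast
  qed
  ultimately show ?thesis by blast
qed

lemma exists_frac_solution_inj_on_frac_jobs:
  assumes "finite J" "frac_feasible J p d x" "(\<Sum>j\<in>J. real (p j) * x j) \<le> real k"
  shows "\<exists>y. frac_feasible J p d y \<and> (\<Sum>j\<in>J. real (p j) * y j) \<le> real k
    \<and> (\<Sum>j\<in>J. real (w j) * x j) \<le> (\<Sum>j\<in>J. real (w j) * y j)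
    \<and> inj_on d (frac_jobs J y)"
  using assms(2,3)
proof (induction "card (frac_jobs J x)" arbitrary: x rule: less_induct)
  case less
  show ?case
  proof (cases "inj_on d (frac_jobs J x)")
    case False
    then obtain a b where "a \<in> frac_jobs J x" "b \<in> frac_jobs J x" "a \<noteq> b" "d a = d b"
      unfolding inj_on_def by blast
    then obtain y where y: "frac_feasible J p d y" "(\<Sum>j\<in>J. real (p j) * y j) \<le> real k"
      "(\<Sum>j\<in>J. real (w j) * x j) \<le> (\<Sum>j\<in>J. real (w j) * y j)"
      and smaller: "frac_jobs J y \<subset> frac_jobs J x"
      using exchange_same_due_date[OF \<open>finite J\<close> less.prems] by blast
    have "card (frac_jobs J y) < card (frac_jobs J x)"
      using smaller \<open>finite J\<close> by (intro psubset_card_mono) (auto simp: frac_jobs_def)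
    then show ?thesis
      using less.hyps y by (meson order_trans)
  qed (use less.prems in blast)
qed

lemma full_jobs_load_le:
  assumes "finite J" "\<forall>j\<in>J. 0 \<le> x j"
  shows "(\<Sum>l\<in>{l \<in> full_jobs J x. P l}. real (p l)) \<le> (\<Sum>l\<in>{l\<in>J. P l}. real (p l) * x l)"
proof -
  have "(\<Sum>l\<in>{l \<in> full_jobs J x. P l}. real (p l))
      = (\<Sum>l\<in>{l \<in> full_jobs J x. P l}. real (p l) * x l)"
    by (intro sum.cong) (auto simp: full_jobs_def)
  also have "\<dots> \<le> (\<Sum>l\<in>{l\<in>J. P l}. real (p l) * x l)"
    using assms by (intro sum_mono2) (auto simp: full_jobs_def)
  finally show ?thesis .
qed

lemma early_set_full_jobs:
  assumes "finite J" "frac_feasible J p d x"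
  shows "early_set J p d (full_jobs J x)"
  unfolding early_set_def
proof (intro conjI ballI)
  show "full_jobs J x \<subseteq> J"
    by (auto simp: full_jobs_def)
  fix j assume "j \<in> J"
  have "real (\<Sum>l\<in>{l \<in> full_jobs J x. d l \<le> d j}. p l)
      \<le> (\<Sum>l\<in>{l\<in>J. d l \<le> d j}. real (p l) * x l)"
    using assms full_jobs_load_le[of J x] unfolding frac_feasible_def by (simp add: of_nat_sum)
  also have "\<dots> \<le> real (d j)"
    using assms \<open>j \<in> J\<close> unfolding frac_feasible_def by blast
  finally show "(\<Sum>l\<in>{l \<in> full_jobs J x. d l \<le> d j}. p l) \<le> d j"
    by linarith
qed

lemma frac_value_le_full_jobs_plus_frac_jobs:
  assumes "finite J" "\<forall>j\<in>J. 0 \<le> x j \<and> x j \<le> 1"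
  shows "(\<Sum>j\<in>J. real (w j) * x j)
    \<le> (\<Sum>j\<in>full_jobs J x. real (w j)) + real (card (frac_jobs J x)) * real (Max (w ` J))"
proof -
  have "real (w j) * x j
      \<le> real (w j) * indicator (full_jobs J x) j + indicator (frac_jobs J x) j * real (Max (w ` J))"
    if "j \<in> J" for j
  proof -
    have "real (w j) * x j \<le> real (w j)"
      using assms that by (simp add: mult_left_le)
    also have "\<dots> \<le> real (Max (w ` J))"
      using assms that by simp
    finally show ?thesis
      using assms that by (auto simp: full_jobs_def frac_jobs_def indicator_def)
  qed
  then have "(\<Sum>j\<in>J. real (w j) * x j)
      \<le> (\<Sum>j\<in>J. real (w j) * indicator (full_jobs J x) j
             + indicator (frac_jobs J x) j * real (Max (w ` J)))"
    by (rule sum_mono)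
  also have "\<dots> = (\<Sum>j\<in>full_jobs J x. real (w j)) + real (card (frac_jobs J x)) * real (Max (w ` J))"
    using assms(1) by (simp add: sum.distrib Int_absorb1 full_jobs_def frac_jobs_def)
  finally show ?thesis .
qed

lemma sol_vec_candidates_finite_nonempty:
  assumes "finite J"
  shows "finite {(\<Sum>j\<in>S. w j) | S. early_set J p d S \<and> (\<Sum>j\<in>S. p j) \<le> k}"
      (is "finite ?C")
    and "{(\<Sum>j\<in>S. w j) | S. early_set J p d S \<and> (\<Sum>j\<in>S. p j) \<le> k} \<noteq> {}"
proof -
  have "?C \<subseteq> (\<lambda>S. \<Sum>j\<in>S. w j) ` Pow J"
    unfolding early_set_def by auto
  then show "finite ?C"
    by (rule finite_subset) (simp add: assms)
  have "early_set J p d {}"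
    unfolding early_set_def by simp
  then show "?C \<noteq> {}"
    by fastforce
qed

lemma sum_weight_le_sol_vec:
  assumes "finite J" "early_set J p d S" "(\<Sum>j\<in>S. p j) \<le> k"
  shows "(\<Sum>j\<in>S. w j) \<le> sol_vec J p w d k"
  unfolding sol_vec_def using assms sol_vec_candidates_finite_nonempty(1)[of J w p d k]
  by (intro Max_ge) auto

lemma sol_vec_attained:
  assumes "finite J"
  obtains S where "early_set J p d S" "(\<Sum>j\<in>S. p j) \<le> k" "(\<Sum>j\<in>S. w j) = sol_vec J p w d k"
  using Max_in[OF sol_vec_candidates_finite_nonempty[OF assms, of w p d k]]
  unfolding sol_vec_def by auto

lemma sum_of_nat_mult_indicator:
  assumes "finite J" "S \<subseteq> J"
  shows "(\<Sum>j\<in>{j\<in>J. P j}. real (f j) * indicator S j) = real (\<Sum>j\<in>{j\<in>S. P j}. f j)"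
proof -
  have "(\<Sum>j\<in>{j\<in>J. P j}. real (f j) * indicator S j)
      = (\<Sum>j\<in>{j\<in>J. P j} \<inter> S. real (f j))"
    using assms(1) by (intro Indicator_Function.sum_mult_indicator) simp
  also have "{j\<in>J. P j} \<inter> S = {j\<in>S. P j}"
    using assms(2) by auto
  finally show ?thesis
    by (simp add: of_nat_sum)
qed

lemma frac_feasible_indicator:
  assumes "finite J" "early_set J p d S"
  shows "frac_feasible J p d (indicator S)"
  unfolding frac_feasible_def
proof (intro conjI ballI)
  fix j assume "j \<in> J"
  show "(0::real) \<le> indicator S j" "indicator S j \<le> (1::real)"
    by (simp_all add: indicator_def)
  have "S \<subseteq> J"
    using assms(2) unfolding early_set_def by blast
  with assms(1) have "(\<Sum>l\<in>{l\<in>J. d l \<le> d j}. real (p l) * indicator S l)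
      = real (\<Sum>l\<in>{l\<in>S. d l \<le> d j}. p l)"
    by (rule sum_of_nat_mult_indicator)
  also have "\<dots> \<le> real (d j)"
    using assms(2) \<open>j \<in> J\<close> unfolding early_set_def of_nat_le_iff by blast
  finally show "(\<Sum>l\<in>{l\<in>J. d l \<le> d j}. real (p l) * indicator S l) \<le> real (d j)" .
qed

lemma frac_value_le_sol_vec_plus_card_due_dates:
  assumes fin: "finite J" and "frac_feasible J p d x" "(\<Sum>j\<in>J. real (p j) * x j) \<le> real k"
  shows "(\<Sum>j\<in>J. real (w j) * x j)
    \<le> real (sol_vec J p w d k) + real (card (d ` J)) * real (Max (w ` J))"
proof -
  obtain y where feas: "frac_feasible J p d y" and budget: "(\<Sum>j\<in>J. real (p j) * y j) \<le> real k"
    and better: "(\<Sum>j\<in>J. real (w j) * x j) \<le> (\<Sum>j\<in>J. real (w j) * y j)"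
    and inj: "inj_on d (frac_jobs J y)"
    using exists_frac_solution_inj_on_frac_jobs[OF assms] by blast
  have y01: "\<forall>j\<in>J. 0 \<le> y j \<and> y j \<le> 1"
    using feas unfolding frac_feasible_def by blast
  have "(\<Sum>j\<in>full_jobs J y. real (p j)) \<le> (\<Sum>j\<in>J. real (p j) * y j)"
    using full_jobs_load_le[of J y, where P = "\<lambda>_. True" and p = p] fin y01 by simp
  then have "(\<Sum>j\<in>full_jobs J y. p j) \<le> k"
    using budget by (simp flip: of_nat_sum)
  then have "(\<Sum>j\<in>full_jobs J y. w j) \<le> sol_vec J p w d k"
    using fin early_set_full_jobs[OF fin feas] by (intro sum_weight_le_sol_vec)
  moreover have "card (frac_jobs J y) \<le> card (d ` J)"
    using inj fin by (intro card_inj_on_le) (auto simp: frac_jobs_def)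
  ultimately have "(\<Sum>j\<in>full_jobs J y. real (w j)) + real (card (frac_jobs J y)) * real (Max (w ` J))
      \<le> real (sol_vec J p w d k) + real (card (d ` J)) * real (Max (w ` J))"
    by (intro add_mono mult_right_mono) (simp_all flip: of_nat_sum)
  then show ?thesis
    using better frac_value_le_full_jobs_plus_frac_jobs[OF fin y01, of w] by linarith
qed

lemma exists_frac_solution_with_value_sol_vec:
  assumes "finite J"
  shows "\<exists>x. frac_feasible J p d x \<and> (\<Sum>j\<in>J. real (p j) * x j) \<le> real k
    \<and> (\<Sum>j\<in>J. real (w j) * x j) = real (sol_vec J p w d k)"
proof -
  obtain S where S: "early_set J p d S" "(\<Sum>j\<in>S. p j) \<le> k" "(\<Sum>j\<in>S. w j) = sol_vec J p w d k"
    using sol_vec_attained[OF assms] .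
  have "S \<subseteq> J"
    using S(1) unfolding early_set_def by blast
  have "(\<Sum>j\<in>J. real (p j) * indicator S j) \<le> real k"
    using sum_of_nat_mult_indicator[OF assms \<open>S \<subseteq> J\<close>, where P = "\<lambda>_. True" and f = p]
      S(2)
    by (simp flip: of_nat_sum)
  moreover have "(\<Sum>j\<in>J. real (w j) * indicator S j) = real (sol_vec J p w d k)"
    using sum_of_nat_mult_indicator[OF assms \<open>S \<subseteq> J\<close>, where P = "\<lambda>_. True" and f = w]
      S(3)
    by simp
  ultimately show ?thesis
    using frac_feasible_indicator[OF assms S(1)] by blast
qed

theorem lemma18:
  fixes J :: "nat set" and p w d :: "nat \<Rightarrow> nat" and k :: nat
  assumes "finite J" and "J \<noteq> {}"
    and "k \<le> Max (d ` J)"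
  shows "0 \<le> frac_sol_vec J p w d k - real (sol_vec J p w d k)
       \<and> frac_sol_vec J p w d k - real (sol_vec J p w d k)
           \<le> real (card (d ` J)) * real (Max (w ` J))"
proof -
  let ?V = "{(\<Sum>j\<in>J. real (w j) * x j) | x. frac_feasible J p d x \<and>
              (\<Sum>j\<in>J. real (p j) * x j) \<le> real k}"
  let ?B = "real (sol_vec J p w d k) + real (card (d ` J)) * real (Max (w ` J))"
  have attained: "real (sol_vec J p w d k) \<in> ?V"
    using exists_frac_solution_with_value_sol_vec[OF assms(1), of p d k w] by force
  have bounded: "\<forall>v\<in>?V. v \<le> ?B"
    using frac_value_le_sol_vec_plus_card_due_dates[OF assms(1)] by blast
  have "bdd_above ?V"
    unfolding bdd_above_def using bounded by blast
  with attained have "real (sol_vec J p w d k) \<le> Sup ?V"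
    by (rule cSup_upper)
  moreover have "Sup ?V \<le> ?B"
    using attained bounded by (intro cSup_least) auto
  ultimately show ?thesis
    unfolding frac_sol_vec_def by linarith
qed

end
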